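(* Let $(X,\tau_\delta)_{\delta>0}$ be a Hilbert dilation system, $\mathcal E\subseteq X$ an ellipsoid, $\epsilon\in(0,1/2)$, $I\subseteq(0,\infty)$ a compact interval, and suppose $\tau_\delta\mathcal E$ is $\epsilon$-degenerate for every $\delta\in I$. Then there is a subspace $H\subseteq X$ such that for all $\delta\in I$: (a) $\tau_\delta\mathcal E\subseteq\tau_\delta H+\epsilon\mathcal B$, and (b) $\tau_\delta H\cap\frac{1}{2\epsilon}\mathcal B\subseteq\tau_\delta\mathcal E$.
   Context: Hilbert dilation system: $X$ a real Hilbert space of finite dimension $d$, $X=\bigoplus_{\nu=1}^mX_\nu$ orthogonal, $\tau_\delta|_{X_\nu}=\delta^{-\nu}\mathrm{id}$. $\mathcal B$ is the closed unit ball of $X$. A (centered) ellipsoid is a set $\{\sum_{i=1}^dc_i\sigma_iv_i:\sum c_i^2\le1\}$ with $\sigma_1\ge\dots\ge\sigma_d\ge0$ (principal axis lengths) and $\{v_i\}$ an orthonormal basis. An ellipsoid is $\epsilon$-degenerate if none of its principal axis lengths lies in $[\epsilon,\epsilon^{-1}]$. *)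

theory Defs
  imports "HOL-Analysis.Analysis"
begin

definition hilbert_dilation_system ::
  "nat \<Rightarrow> (nat \<Rightarrow> 'a::euclidean_space set) \<Rightarrow> (real \<Rightarrow> 'a \<Rightarrow> 'a) \<Rightarrow> bool" where
  "hilbert_dilation_system m Xs tau \<longleftrightarrow>
     (\<forall>nu\<in>{1..m}. subspace (Xs nu)) \<and>
     (\<forall>nu\<in>{1..m}. \<forall>mu\<in>{1..m}. nu \<noteq> mu \<longrightarrow>
         (\<forall>x\<in>Xs nu. \<forall>y\<in>Xs mu. x \<bullet> y = 0)) \<and>
     span (\<Union>nu\<in>{1..m}. Xs nu) = UNIV \<and>
     (\<forall>delta>0. linear (tau delta) \<and>
        (\<forall>nu\<in>{1..m}. \<forall>x\<in>Xs nu. tau delta x = (delta powi (- int nu)) *\<^sub>R x))"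

text \<open>E is the ellipsoid with principal axis lengths sg 0 \<ge> ... \<ge> sg (d-1) \<ge> 0
  along the orthonormal basis v 0, ..., v (d-1), where d = DIM('a).\<close>
definition ellipsoid_rep :: "'a::euclidean_space set \<Rightarrow> (nat \<Rightarrow> real) \<Rightarrow> (nat \<Rightarrow> 'a) \<Rightarrow> bool" where
  "ellipsoid_rep E sg v \<longleftrightarrow>
     (\<forall>i<DIM('a). norm (v i) = 1) \<and>
     (\<forall>i<DIM('a). \<forall>j<DIM('a). i \<noteq> j \<longrightarrow> v i \<bullet> v j = 0) \<and>
     (\<forall>i<DIM('a). 0 \<le> sg i) \<and>
     (\<forall>i<DIM('a). \<forall>j<DIM('a). i \<le> j \<longrightarrow> sg j \<le> sg i) \<and>
     E = {(\<Sum>i<DIM('a). (c i * sg i) *\<^sub>R v i) | c. (\<Sum>i<DIM('a). (c i)\<^sup>2) \<le> 1}"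

definition ellipsoid :: "'a::euclidean_space set \<Rightarrow> bool" where
  "ellipsoid E \<longleftrightarrow> (\<exists>sg v. ellipsoid_rep E sg v)"

definition eps_degenerate :: "real \<Rightarrow> 'a::euclidean_space set \<Rightarrow> bool" where
  "eps_degenerate eps E \<longleftrightarrow>
     (\<exists>sg v. ellipsoid_rep E sg v \<and> (\<forall>i<DIM('a). sg i \<notin> {eps..1/eps}))"

end

theory Submission imports Defs begin

(* Let L be the span of the principal axes of tau a E longer than 1/eps and H = tau (1/a) L.
   For delta >= a the map tau (delta/a) is a contraction, so the short axes of tau a E, of length
   < eps, stay short; this gives (a).
   For (b), the inclusion tau delta H \<inter> B(1/(2 eps)) \<subseteq> tau delta E is propagated upwards from
   delta = a in steps delta \<le> rho gamma with rho^m 2 eps \<le> 1/(2 eps): across such a step the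
   dilations stretch norms by at most rho^m, so the inclusion at gamma yields the one with radius
   2 eps at delta, and degeneracy of tau delta E upgrades the radius back to 1/(2 eps). Indeed,
   otherwise some z \<in> L lies outside tau a E. The hyperplane through 0 orthogonal to the gradient
   at z of the quadratic form of tau a E meets L in a subspace of smaller dimension, so counting
   dimensions gives a vector x of length 1/eps spanned by the long axes of tau delta E and
   orthogonal to the image of that subspace. Then x \<in> tau delta E, but splitting its preimage
   along L shows |x| \<le> 1/(2 eps) + eps < 1/eps. *)

lemma sum_squares_subset_le:
  fixes c :: "'i \<Rightarrow> real"
  shows "finite I \<Longrightarrow> K \<subseteq> I \<Longrightarrow> (\<Sum>i\<in>K. (c i)\<^sup>2) \<le> (\<Sum>i\<in>I. (c i)\<^sup>2)"
  by (rule sum_mono2) auto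

lemma abs_mult_le_half_sum_squares: "\<bar>p * q\<bar> \<le> (p\<^sup>2 + q\<^sup>2) / 2" for p q :: real
proof -
  have "0 \<le> (\<bar>p\<bar> - \<bar>q\<bar>)\<^sup>2" by simp
  then show ?thesis by (simp add: power2_eq_square abs_mult algebra_simps)
qed

lemma abs_sum_mult_le_sum_squares:
  fixes p c :: "'i \<Rightarrow> real"
  assumes "(\<Sum>i\<in>I. (c i)\<^sup>2) \<le> 1" "1 \<le> (\<Sum>i\<in>I. (p i)\<^sup>2)"
  shows "\<bar>\<Sum>i\<in>I. p i * c i\<bar> \<le> (\<Sum>i\<in>I. (p i)\<^sup>2)"
proof -
  have "\<bar>\<Sum>i\<in>I. p i * c i\<bar> \<le> (\<Sum>i\<in>I. ((p i)\<^sup>2 + (c i)\<^sup>2) / 2)"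
    using sum_abs[of "\<lambda>i. p i * c i" I] sum_mono[OF abs_mult_le_half_sum_squares] by (rule order_trans)
  also have "\<dots> = ((\<Sum>i\<in>I. (p i)\<^sup>2) + (\<Sum>i\<in>I. (c i)\<^sup>2)) / 2"
    by (simp add: sum.distrib flip: sum_divide_distrib)
  also have "\<dots> \<le> (\<Sum>i\<in>I. (p i)\<^sup>2)"
    using assms by simp
  finally show ?thesis .
qed

lemma half_inverse_plus_lt_inverse:
  fixes eps :: real
  assumes "0 < eps" "eps < 1/2"
  shows "1/(2*eps) + eps < 1/eps"
proof -
  have "eps * eps < 1/2 * (1/2)"
    using assms by (intro mult_strict_mono) auto
  then have "eps < 1/(2*eps)"
    using assms(1) by (simp add: pos_less_divide_eq mult.commute mult.left_commute)
  moreover have "1/eps = 1/(2*eps) + 1/(2*eps)"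
    using assms(1) by (simp add: field_simps)
  ultimately show ?thesis
    by linarith
qed

lemma exists_gt_one_power_mult_le:
  fixes r R :: real
  assumes "0 < r" "r < R"
  obtains \<rho> where "1 < \<rho>" "\<rho> ^ m * r \<le> R"
proof
  let ?\<rho> = "root (Suc m) (R / r)"
  show "1 < ?\<rho>"
    using assms by simp
  have "?\<rho> ^ m \<le> ?\<rho> ^ Suc m"
    using \<open>1 < ?\<rho>\<close> by (intro power_increasing) auto
  also have "\<dots> = R / r"
    using assms by (intro real_root_pow_pos2) auto
  finally show "?\<rho> ^ m * r \<le> R"
    using assms(1) by (simp add: le_divide_eq)
qed

lemma geometric_interval_induct:
  fixes a b \<rho> \<delta> :: real
  assumes "1 < \<rho>" "0 < a" "P a"
    and step: "\<And>\<gamma> \<delta>. a \<le> \<gamma> \<Longrightarrow> \<gamma> \<le> \<delta> \<Longrightarrow> \<delta> \<le> \<rho> * \<gamma> \<Longrightarrow> \<delta> \<le> b \<Longrightarrow> P \<gamma> \<Longrightarrow> P \<delta>"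
    and "\<delta> \<in> {a..b}"
  shows "P \<delta>"
proof -
  have "P \<delta>" if "a \<le> \<delta>" "\<delta> \<le> b" "\<delta> \<le> a * \<rho> ^ n" for n \<delta>
    using that
  proof (induction n arbitrary: \<delta>)
    case 0
    then have "\<delta> = a"
      by simp
    then show ?case
      using \<open>P a\<close> by simp
  next
    case (Suc n)
    let ?\<gamma> = "a * \<rho> ^ n"
    show ?case
    proof (cases "\<delta> \<le> ?\<gamma>")
      case True
      then show ?thesis
        using Suc.IH[OF Suc.prems(1,2)] by blast
    next
      case False
      show ?thesis
      proof (rule step)
        show "a \<le> ?\<gamma>"
          using assms(1,2) by (simp add: one_le_power)
        show "?\<gamma> \<le> \<delta>" "\<delta> \<le> b"
          using False Suc.prems(2) by simp_all
        show "\<delta> \<le> \<rho> * ?\<gamma>"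
          using Suc.prems(3) by (simp add: mult.left_commute)
        show "P ?\<gamma>"
          using Suc.IH[OF \<open>a \<le> ?\<gamma>\<close>] \<open>?\<gamma> \<le> \<delta>\<close> \<open>\<delta> \<le> b\<close> by simp
      qed
    qed
  qed
  moreover obtain n where "\<delta> / a < \<rho> ^ n"
    using real_arch_pow[OF assms(1)] by blast
  then have "\<delta> \<le> a * \<rho> ^ n"
    using assms(2) by (simp add: divide_less_eq mult.commute)
  ultimately show ?thesis
    using assms(5) by simp
qed

lemma norm_le_of_orthogonal_component:
  fixes x y w g :: "'a::real_inner"
  assumes "x = y + w" "(y - \<beta> *\<^sub>R g) \<bullet> x = 0" "\<bar>\<beta>\<bar> \<le> 1"
  shows "norm x \<le> norm g + norm w"
proof (cases "x = 0")
  case False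
  have "(norm x)\<^sup>2 = \<beta> * (g \<bullet> x) + w \<bullet> x"
    using assms(1,2) by (simp add: power2_norm_eq_inner inner_add_left inner_diff_left)
  also have "\<dots> \<le> norm g * norm x + norm w * norm x"
  proof (rule add_mono)
    have "\<beta> * (g \<bullet> x) \<le> \<bar>\<beta>\<bar> * \<bar>g \<bullet> x\<bar>"
      using abs_ge_self[of "\<beta> * (g \<bullet> x)"] by (simp add: abs_mult)
    also have "\<dots> \<le> 1 * (norm g * norm x)"
      using assms(3) Cauchy_Schwarz_ineq2[of g x] by (intro mult_mono) auto
    finally show "\<beta> * (g \<bullet> x) \<le> norm g * norm x" by simp
  qed (rule norm_cauchy_schwarz)
  finally show ?thesis
    using False by (simp add: power2_eq_square distrib_right[symmetric])
qed simp

lemma subspace_Int_exists_norm: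
  fixes S T :: "'a::euclidean_space set"
  assumes "subspace S" "subspace T" "DIM('a) < dim S + dim T" "0 \<le> r"
  obtains x where "x \<in> S" "x \<in> T" "norm x = r"
proof -
  have "dim {x + y |x y. x \<in> S \<and> y \<in> T} + dim (S \<inter> T) = dim S + dim T"
    by (rule dim_sums_Int[OF assms(1,2)])
  moreover have "dim {x + y |x y. x \<in> S \<and> y \<in> T} \<le> DIM('a)"
    by (rule dim_subset_UNIV)
  ultimately have "dim (S \<inter> T) \<noteq> 0"
    using assms(3) by linarith
  then obtain x where x: "x \<in> S" "x \<in> T" "x \<noteq> 0"
    by (auto simp: dim_eq_0)
  show ?thesis
    using that[of "(r / norm x) *\<^sub>R x"] x assms(1,2,4) by (simp add: subspace_scale)
qed

lemma dim_orthogonal_comp: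
  fixes W :: "'a::euclidean_space set"
  assumes "subspace W"
  shows "dim (W\<^sup>\<bottom>) + dim W = DIM('a)"
  using dim_subspace_orthogonal_to_vectors[OF assms subspace_UNIV subset_UNIV]
  by (simp add: orthogonal_comp_def)

lemma exists_orthogonal_of_dim_less:
  fixes A W :: "'a::euclidean_space set"
  assumes "subspace A" "subspace W" "dim W < dim A" "0 \<le> r"
  obtains x where "x \<in> A" "\<forall>y\<in>W. y \<bullet> x = 0" "norm x = r"
proof (rule subspace_Int_exists_norm[OF assms(1) subspace_orthogonal_comp _ assms(4)])
  show "DIM('a) < dim A + dim (W\<^sup>\<bottom>)"
    using dim_orthogonal_comp[OF assms(2)] assms(3) by linarith
qed (use that in \<open>auto simp: orthogonal_comp_def orthogonal_def\<close>)

lemma subspace_Int_hyperplane: "subspace L \<Longrightarrow> subspace {y \<in> L. p \<bullet> y = 0}"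
  using subspace_inter[OF _ subspace_hyperplane[of p]] by (simp add: Int_def)

lemma dim_Int_hyperplane_less:
  fixes L :: "'a::euclidean_space set"
  assumes "subspace L" "z \<in> L" "p \<bullet> z \<noteq> 0"
  shows "dim {y \<in> L. p \<bullet> y = 0} < dim L"
proof (rule dim_psubset)
  show "span {y \<in> L. p \<bullet> y = 0} \<subset> span L"
    using assms subspace_Int_hyperplane[OF assms(1), of p] by (auto simp: span_eq_iff[THEN iffD2])
qed

definition orthonormal_on :: "'i set \<Rightarrow> ('i \<Rightarrow> 'a::real_inner) \<Rightarrow> bool" where
  "orthonormal_on I v \<longleftrightarrow> (\<forall>i\<in>I. \<forall>j\<in>I. v i \<bullet> v j = (if i = j then 1 else 0))"

lemma orthonormal_on_subset: "orthonormal_on I v \<Longrightarrow> K \<subseteq> I \<Longrightarrow> orthonormal_on K v"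
  unfolding orthonormal_on_def by blast

lemma inner_sum_orthonormal:
  assumes "orthonormal_on I v" "finite K" "K \<subseteq> I" "j \<in> I"
  shows "(\<Sum>i\<in>K. b i *\<^sub>R v i) \<bullet> v j = (if j \<in> K then b j else 0)"
proof -
  have "(\<Sum>i\<in>K. b i *\<^sub>R v i) \<bullet> v j = (\<Sum>i\<in>K. if i = j then b i else 0)"
    unfolding inner_sum_left
    by (rule sum.cong) (use assms in \<open>auto simp: orthonormal_on_def\<close>)
  then show ?thesis
    using assms(2) by (simp add: sum.delta')
qed

lemma norm_sum_orthonormal_squared:
  assumes "orthonormal_on I v" "finite I"
  shows "(norm (\<Sum>i\<in>I. b i *\<^sub>R v i))\<^sup>2 = (\<Sum>i\<in>I. (b i)\<^sup>2)"
proof -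
  have "(norm (\<Sum>i\<in>I. b i *\<^sub>R v i))\<^sup>2 = (\<Sum>i\<in>I. (norm (b i *\<^sub>R v i))\<^sup>2)"
    by (rule norm_sum_Pythagorean)
      (use assms in \<open>auto simp: pairwise_def orthogonal_def orthonormal_on_def\<close>)
  also have "\<dots> = (\<Sum>i\<in>I. (b i)\<^sup>2)"
  proof (rule sum.cong)
    fix i assume "i \<in> I"
    then have "norm (v i) = 1"
      using assms(1) by (simp add: orthonormal_on_def norm_eq_1)
    then show "(norm (b i *\<^sub>R v i))\<^sup>2 = (b i)\<^sup>2"
      by simp
  qed simp
  finally show ?thesis .
qed

lemma norm_sum_orthonormal_le:
  assumes "orthonormal_on I v" "finite I" "\<And>i. i \<in> I \<Longrightarrow> \<bar>b i\<bar> \<le> r * \<bar>c i\<bar>"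
    and "(\<Sum>i\<in>I. (c i)\<^sup>2) \<le> 1" "0 \<le> r"
  shows "norm (\<Sum>i\<in>I. b i *\<^sub>R v i) \<le> r"
proof (rule power2_le_imp_le)
  have "(norm (\<Sum>i\<in>I. b i *\<^sub>R v i))\<^sup>2 = (\<Sum>i\<in>I. \<bar>b i\<bar>\<^sup>2)"
    using norm_sum_orthonormal_squared[OF assms(1,2)] by simp
  also have "\<dots> \<le> (\<Sum>i\<in>I. r\<^sup>2 * (c i)\<^sup>2)"
  proof (rule sum_mono)
    fix i assume "i \<in> I"
    then have "\<bar>b i\<bar>\<^sup>2 \<le> (r * \<bar>c i\<bar>)\<^sup>2"
      using assms(3) by (intro power_mono) auto
    then show "\<bar>b i\<bar>\<^sup>2 \<le> r\<^sup>2 * (c i)\<^sup>2"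
      by (simp add: power_mult_distrib)
  qed
  also have "\<dots> \<le> r\<^sup>2"
    using assms(4) by (simp add: mult_left_le flip: sum_distrib_left)
  finally show "(norm (\<Sum>i\<in>I. b i *\<^sub>R v i))\<^sup>2 \<le> r\<^sup>2" .
qed (rule assms(5))

lemma orthonormal_on_inj_on: "orthonormal_on I v \<Longrightarrow> inj_on v I"
  unfolding orthonormal_on_def inj_on_def by (metis zero_neq_one)

lemma orthonormal_on_independent:
  assumes "orthonormal_on I v"
  shows "independent (v ` I)"
proof (rule pairwise_orthogonal_independent)
  show "pairwise orthogonal (v ` I)"
    using assms unfolding pairwise_def orthogonal_def orthonormal_on_def by auto
  show "0 \<notin> v ` I"
    using assms unfolding orthonormal_on_def by force
qed

lemma dim_span_orthonormal: "orthonormal_on I v \<Longrightarrow> dim (span (v ` I)) = card I"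
  by (simp add: dim_eq_card_independent orthonormal_on_independent orthonormal_on_inj_on card_image)

lemma span_orthonormal_expansion:
  assumes "orthonormal_on I v" "finite I" "z \<in> span (v ` I)"
  shows "z = (\<Sum>i\<in>I. (z \<bullet> v i) *\<^sub>R v i)"
proof -
  obtain u where "z = (\<Sum>w\<in>v ` I. u w *\<^sub>R w)"
    using assms(2,3) span_finite[of "v ` I"] by auto
  then have z: "z = (\<Sum>i\<in>I. u (v i) *\<^sub>R v i)"
    by (simp add: sum.reindex[OF orthonormal_on_inj_on[OF assms(1)]])
  have coeff: "z \<bullet> v j = u (v j)" if "j \<in> I" for j
    using inner_sum_orthonormal[OF assms(1,2) order_refl that] that z by simp
  note z
  also have "(\<Sum>i\<in>I. u (v i) *\<^sub>R v i) = (\<Sum>i\<in>I. (z \<bullet> v i) *\<^sub>R v i)"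
    by (rule sum.cong) (simp_all add: coeff)
  finally show ?thesis .
qed

lemma norm_squared_span_orthonormal:
  assumes "orthonormal_on I v" "finite I" "z \<in> span (v ` I)"
  shows "(norm z)\<^sup>2 = (\<Sum>i\<in>I. (z \<bullet> v i)\<^sup>2)"
proof -
  have "(norm z)\<^sup>2 = (norm (\<Sum>i\<in>I. (z \<bullet> v i) *\<^sub>R v i))\<^sup>2"
    by (rule arg_cong[OF span_orthonormal_expansion[OF assms]])
  also have "\<dots> = (\<Sum>i\<in>I. (z \<bullet> v i)\<^sup>2)"
    by (rule norm_sum_orthonormal_squared[OF assms(1,2)])
  finally show ?thesis .
qed

section \<open>Ellipsoids\<close>

lemma ellipsoid_rep_orthonormal:
  assumes "ellipsoid_rep (E::'a::euclidean_space set) sg v"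
  shows "orthonormal_on {..<DIM('a)} v"
proof -
  have "\<forall>i<DIM('a). norm (v i) = 1" "\<forall>i<DIM('a). \<forall>j<DIM('a). i \<noteq> j \<longrightarrow> v i \<bullet> v j = 0"
    using assms by (simp_all add: ellipsoid_rep_def)
  then show ?thesis
    by (auto simp: orthonormal_on_def norm_eq_1)
qed

lemma ellipsoid_rep_nonneg: "ellipsoid_rep (E::'a::euclidean_space set) sg v \<Longrightarrow> i < DIM('a) \<Longrightarrow> 0 \<le> sg i"
  by (simp add: ellipsoid_rep_def)

lemma mem_ellipsoid_rep:
  assumes "ellipsoid_rep (E::'a::euclidean_space set) sg v"
  shows "x \<in> E \<longleftrightarrow> (\<exists>c. (\<Sum>i<DIM('a). (c i)\<^sup>2) \<le> 1 \<and> x = (\<Sum>i<DIM('a). (c i * sg i) *\<^sub>R v i))"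
proof -
  have "E = {(\<Sum>i<DIM('a). (c i * sg i) *\<^sub>R v i) | c. (\<Sum>i<DIM('a). (c i)\<^sup>2) \<le> 1}"
    using assms by (simp add: ellipsoid_rep_def)
  then show ?thesis
    by blast
qed

lemma ellipsoid_rep_partial_sum_norm_le:
  fixes E :: "'a::euclidean_space set"
  assumes rep: "ellipsoid_rep E sg v" and K: "K \<subseteq> {..<DIM('a)}"
    and short: "\<And>i. i \<in> K \<Longrightarrow> sg i \<le> r" and "0 \<le> r" and c: "(\<Sum>i\<in>K. (c i)\<^sup>2) \<le> 1"
  shows "norm (\<Sum>i\<in>K. (c i * sg i) *\<^sub>R v i) \<le> r"
proof (rule norm_sum_orthonormal_le[OF _ _ _ c \<open>0 \<le> r\<close>])
  show "orthonormal_on K v"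
    using ellipsoid_rep_orthonormal[OF rep] K by (rule orthonormal_on_subset)
  show "finite K"
    using K finite_subset by blast
  fix i assume i: "i \<in> K"
  have "0 \<le> sg i"
    using ellipsoid_rep_nonneg[OF rep] i K by blast
  then have "\<bar>c i * sg i\<bar> = sg i * \<bar>c i\<bar>"
    by (simp add: abs_mult mult.commute)
  also have "\<dots> \<le> r * \<bar>c i\<bar>"
    using short[OF i] by (simp add: mult_right_mono)
  finally show "\<bar>c i * sg i\<bar> \<le> r * \<bar>c i\<bar>" .
qed

lemma ellipsoid_rep_decompose:
  fixes E :: "'a::euclidean_space set"
  assumes rep: "ellipsoid_rep E sg v" and J: "J \<subseteq> {..<DIM('a)}"
    and short: "\<And>i. i < DIM('a) \<Longrightarrow> i \<notin> J \<Longrightarrow> sg i \<le> r" and "0 \<le> r" and "y \<in> E"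
  obtains c w where "(\<Sum>i\<in>J. (c i)\<^sup>2) \<le> 1" "y = (\<Sum>i\<in>J. (c i * sg i) *\<^sub>R v i) + w" "norm w \<le> r"
proof -
  obtain c where c: "(\<Sum>i<DIM('a). (c i)\<^sup>2) \<le> 1" "y = (\<Sum>i<DIM('a). (c i * sg i) *\<^sub>R v i)"
    using mem_ellipsoid_rep[OF rep] \<open>y \<in> E\<close> by blast
  define K where "K = {..<DIM('a)} - J"
  have "y = (\<Sum>i\<in>J. (c i * sg i) *\<^sub>R v i) + (\<Sum>i\<in>K. (c i * sg i) *\<^sub>R v i)"
    unfolding c(2) K_def using sum.subset_diff[OF J finite_lessThan] by (simp add: add.commute)
  moreover have "norm (\<Sum>i\<in>K. (c i * sg i) *\<^sub>R v i) \<le> r"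
  proof (rule ellipsoid_rep_partial_sum_norm_le[OF rep _ _ \<open>0 \<le> r\<close>])
    show "(\<Sum>i\<in>K. (c i)\<^sup>2) \<le> 1"
      using sum_squares_subset_le[of "{..<DIM('a)}" K c] c(1) by (auto simp: K_def)
  qed (auto simp: K_def short)
  moreover have "(\<Sum>i\<in>J. (c i)\<^sup>2) \<le> 1"
    using sum_squares_subset_le[OF finite_lessThan J, of c] c(1) by simp
  ultimately show ?thesis
    using that by blast
qed

lemma ellipsoid_rep_mem_of_span:
  fixes E :: "'a::euclidean_space set"
  assumes rep: "ellipsoid_rep E sg v" and J: "J \<subseteq> {..<DIM('a)}" and pos: "\<And>i. i \<in> J \<Longrightarrow> 0 < sg i"
    and z: "z \<in> span (v ` J)" "(\<Sum>i\<in>J. (z \<bullet> v i / sg i)\<^sup>2) \<le> 1"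
  shows "z \<in> E"
proof -
  have on: "orthonormal_on J v"
    using ellipsoid_rep_orthonormal[OF rep] J by (rule orthonormal_on_subset)
  define c where "c i = (if i \<in> J then z \<bullet> v i / sg i else 0)" for i
  have "(\<Sum>i<DIM('a). (c i)\<^sup>2) = (\<Sum>i\<in>J. (z \<bullet> v i / sg i)\<^sup>2)"
    unfolding c_def by (rule sum.mono_neutral_cong_right) (use J in auto)
  then have c: "(\<Sum>i<DIM('a). (c i)\<^sup>2) \<le> 1"
    using z(2) by simp
  have "z = (\<Sum>i\<in>J. (z \<bullet> v i) *\<^sub>R v i)"
    using span_orthonormal_expansion[OF on _ z(1)] J finite_subset by blast
  also have "\<dots> = (\<Sum>i<DIM('a). (c i * sg i) *\<^sub>R v i)"
    unfolding c_def by (rule sum.mono_neutral_cong_left) (use J pos in \<open>auto simp: less_imp_neq[symmetric]\<close>)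
  finally show ?thesis
    using mem_ellipsoid_rep[OF rep] c by blast
qed

lemma span_Int_cball_subset_ellipsoid_rep:
  fixes E :: "'a::euclidean_space set"
  assumes rep: "ellipsoid_rep E sg v" and J: "J \<subseteq> {..<DIM('a)}"
    and long: "\<And>i. i \<in> J \<Longrightarrow> R \<le> sg i" and "0 < R"
  shows "span (v ` J) \<inter> cball 0 R \<subseteq> E"
proof
  fix z assume z: "z \<in> span (v ` J) \<inter> cball 0 R"
  have on: "orthonormal_on J v" and fin: "finite J"
    using orthonormal_on_subset[OF ellipsoid_rep_orthonormal[OF rep] J] J finite_subset by auto
  have pos: "0 < sg i" if "i \<in> J" for i
    using long[OF that] \<open>0 < R\<close> by linarith
  have "(\<Sum>i\<in>J. (z \<bullet> v i / sg i)\<^sup>2) \<le> (\<Sum>i\<in>J. (z \<bullet> v i / R)\<^sup>2)"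
  proof (rule sum_mono)
    fix i assume i: "i \<in> J"
    have "(\<bar>z \<bullet> v i\<bar> / sg i)\<^sup>2 \<le> (\<bar>z \<bullet> v i\<bar> / R)\<^sup>2"
      using long[OF i] \<open>0 < R\<close> by (intro power_mono divide_left_mono) auto
    then show "(z \<bullet> v i / sg i)\<^sup>2 \<le> (z \<bullet> v i / R)\<^sup>2"
      by (simp add: power_divide)
  qed
  also have "\<dots> = (norm z / R)\<^sup>2"
    using norm_squared_span_orthonormal[OF on fin] z by (simp add: power_divide flip: sum_divide_distrib)
  also have "\<dots> \<le> 1"
    using z \<open>0 < R\<close> by (simp add: power_le_one)
  finally show "z \<in> E"
    using ellipsoid_rep_mem_of_span[OF rep J pos] z by blast
qed

lemma ellipsoid_rep_Int_span_norm_le: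
  fixes E :: "'a::euclidean_space set"
  assumes rep: "ellipsoid_rep E sg v" and K: "K \<subseteq> {..<DIM('a)}"
    and short: "\<And>i. i \<in> K \<Longrightarrow> sg i \<le> r" and "0 \<le> r" and y: "y \<in> E" "y \<in> span (v ` K)"
  shows "norm y \<le> r"
proof -
  have on: "orthonormal_on {..<DIM('a)} v"
    by (rule ellipsoid_rep_orthonormal[OF rep])
  have fin: "finite K"
    using K finite_subset by blast
  obtain c where c: "(\<Sum>i<DIM('a). (c i)\<^sup>2) \<le> 1" "y = (\<Sum>i<DIM('a). (c i * sg i) *\<^sub>R v i)"
    using mem_ellipsoid_rep[OF rep] y(1) by blast
  have coeff: "y \<bullet> v i = c i * sg i" if "i \<in> K" for i
    using inner_sum_orthonormal[OF on, of "{..<DIM('a)}"] that K c(2) by auto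
  have "y = (\<Sum>i\<in>K. (y \<bullet> v i) *\<^sub>R v i)"
    by (rule span_orthonormal_expansion[OF orthonormal_on_subset[OF on K] fin y(2)])
  also have "\<dots> = (\<Sum>i\<in>K. (c i * sg i) *\<^sub>R v i)"
    by (rule sum.cong) (simp_all add: coeff)
  finally have "norm y = norm (\<Sum>i\<in>K. (c i * sg i) *\<^sub>R v i)"
    by (rule arg_cong)
  also have "\<dots> \<le> r"
    using ellipsoid_rep_partial_sum_norm_le[OF rep K short \<open>0 \<le> r\<close>]
      sum_squares_subset_le[OF finite_lessThan K, of c] c(1) by simp
  finally show ?thesis .
qed

section \<open>Hilbert dilation systems\<close>

lemma hds_decomposition:
  assumes "hilbert_dilation_system m Xs tau"
  obtains f where "\<forall>\<nu>\<in>{1..m}. f \<nu> \<in> Xs \<nu>" "x = (\<Sum>\<nu>=1..m. f \<nu>)"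
proof -
  let ?S = "{y. \<exists>f. (\<forall>\<nu>\<in>{1..m}. f \<nu> \<in> Xs \<nu>) \<and> y = (\<Sum>\<nu>=1..m. f \<nu>)}"
  have sub: "\<forall>\<nu>\<in>{1..m}. subspace (Xs \<nu>)"
    using assms unfolding hilbert_dilation_system_def by blast
  have "subspace ?S"
    unfolding subspace_def
  proof (intro conjI ballI allI)
    show "0 \<in> ?S"
      using sub by (auto intro!: exI[of _ "\<lambda>_. 0"] simp: subspace_0)
  next
    fix x y assume "x \<in> ?S" "y \<in> ?S"
    then obtain f g where "\<forall>\<nu>\<in>{1..m}. f \<nu> \<in> Xs \<nu>" "x = (\<Sum>\<nu>=1..m. f \<nu>)"
      and "\<forall>\<nu>\<in>{1..m}. g \<nu> \<in> Xs \<nu>" "y = (\<Sum>\<nu>=1..m. g \<nu>)" by blast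
    then show "x + y \<in> ?S"
      using sub by (auto intro!: exI[of _ "\<lambda>\<nu>. f \<nu> + g \<nu>"] simp: sum.distrib subspace_add)
  next
    fix c x assume "x \<in> ?S"
    then obtain f where "\<forall>\<nu>\<in>{1..m}. f \<nu> \<in> Xs \<nu>" "x = (\<Sum>\<nu>=1..m. f \<nu>)" by blast
    then show "c *\<^sub>R x \<in> ?S"
      using sub by (auto intro!: exI[of _ "\<lambda>\<nu>. c *\<^sub>R f \<nu>"] simp: scaleR_sum_right subspace_scale)
  qed
  moreover have "(\<Union>\<nu>\<in>{1..m}. Xs \<nu>) \<subseteq> ?S"
  proof
    fix y assume "y \<in> (\<Union>\<nu>\<in>{1..m}. Xs \<nu>)"
    then obtain \<mu> where "\<mu> \<in> {1..m}" "y \<in> Xs \<mu>" by blast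
    then show "y \<in> ?S"
      using sub by (auto intro!: exI[of _ "\<lambda>\<nu>. if \<nu> = \<mu> then y else 0"] simp: subspace_0)
  qed
  ultimately have "span (\<Union>\<nu>\<in>{1..m}. Xs \<nu>) \<subseteq> ?S"
    by (rule span_minimal[rotated])
  then show ?thesis
    using assms that unfolding hilbert_dilation_system_def by blast
qed

lemma hds_linear: "hilbert_dilation_system m Xs tau \<Longrightarrow> 0 < \<delta> \<Longrightarrow> linear (tau \<delta>)"
  unfolding hilbert_dilation_system_def by blast

lemma hds_tau_sum:
  assumes hds: "hilbert_dilation_system m Xs tau" and f: "\<forall>\<nu>\<in>{1..m}. f \<nu> \<in> Xs \<nu>" and "0 < \<delta>"
  shows "tau \<delta> (\<Sum>\<nu>=1..m. f \<nu>) = (\<Sum>\<nu>=1..m. inverse (\<delta> ^ \<nu>) *\<^sub>R f \<nu>)"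
proof -
  have "\<forall>\<nu>\<in>{1..m}. \<forall>x\<in>Xs \<nu>. tau \<delta> x = (\<delta> powi (- int \<nu>)) *\<^sub>R x"
    using hds \<open>0 < \<delta>\<close> unfolding hilbert_dilation_system_def by blast
  then show ?thesis
    using f by (simp add: linear_sum[OF hds_linear[OF hds \<open>0 < \<delta>\<close>]] power_int_minus)
qed

lemma hds_norm_sum_squared:
  assumes "hilbert_dilation_system m Xs tau" "\<forall>\<nu>\<in>{1..m}. f \<nu> \<in> Xs \<nu>"
  shows "(norm (\<Sum>\<nu>=1..m. g \<nu> *\<^sub>R f \<nu>))\<^sup>2 = (\<Sum>\<nu>=1..m. (g \<nu>)\<^sup>2 * (norm (f \<nu>))\<^sup>2)"
proof -
  have "\<forall>\<nu>\<in>{1..m}. \<forall>\<mu>\<in>{1..m}. \<nu> \<noteq> \<mu> \<longrightarrow> (\<forall>x\<in>Xs \<nu>. \<forall>y\<in>Xs \<mu>. x \<bullet> y = 0)"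
    using assms(1) unfolding hilbert_dilation_system_def by blast
  then have "(norm (\<Sum>\<nu>=1..m. g \<nu> *\<^sub>R f \<nu>))\<^sup>2 = (\<Sum>\<nu>=1..m. (norm (g \<nu> *\<^sub>R f \<nu>))\<^sup>2)"
    by (intro norm_sum_Pythagorean) (use assms(2) in \<open>auto simp: pairwise_def orthogonal_def\<close>)
  then show ?thesis
    by (simp add: power_mult_distrib)
qed

lemma hds_norm_tau_le:
  assumes hds: "hilbert_dilation_system m Xs tau" and "0 < \<delta>" "0 \<le> C"
    and bound: "\<And>\<nu>. \<nu> \<in> {1..m} \<Longrightarrow> inverse (\<delta> ^ \<nu>) \<le> C"
  shows "norm (tau \<delta> x) \<le> C * norm x"
proof (rule power2_le_imp_le)
  obtain f where f: "\<forall>\<nu>\<in>{1..m}. f \<nu> \<in> Xs \<nu>" "x = (\<Sum>\<nu>=1..m. f \<nu>)"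
    using hds_decomposition[OF hds] by blast
  have "(norm (tau \<delta> x))\<^sup>2 = (\<Sum>\<nu>=1..m. (inverse (\<delta> ^ \<nu>))\<^sup>2 * (norm (f \<nu>))\<^sup>2)"
    using hds_tau_sum[OF hds f(1) \<open>0 < \<delta>\<close>] hds_norm_sum_squared[OF hds f(1)] f(2) by simp
  also have "\<dots> \<le> (\<Sum>\<nu>=1..m. C\<^sup>2 * (norm (f \<nu>))\<^sup>2)"
    using bound \<open>0 < \<delta>\<close> by (intro sum_mono mult_right_mono power_mono) auto
  also have "\<dots> = (norm (\<Sum>\<nu>=1..m. C *\<^sub>R f \<nu>))\<^sup>2"
    using hds_norm_sum_squared[OF hds f(1), of "\<lambda>_. C"] by simp
  also have "\<dots> = (C * norm x)\<^sup>2"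
    using f(2) \<open>0 \<le> C\<close> by (simp add: power_mult_distrib flip: scaleR_sum_right)
  finally show "(norm (tau \<delta> x))\<^sup>2 \<le> (C * norm x)\<^sup>2" .
qed (use \<open>0 \<le> C\<close> in simp)

lemma hds_norm_tau_le_norm:
  assumes "hilbert_dilation_system m Xs tau" "1 \<le> \<delta>"
  shows "norm (tau \<delta> x) \<le> norm x"
  using hds_norm_tau_le[OF assms(1), of \<delta> 1 x] assms(2)
  by (simp add: one_le_power inverse_le_1_iff)

lemma hds_norm_tau_le_power:
  assumes "hilbert_dilation_system m Xs tau" "0 < \<mu>" "\<mu> \<le> 1"
  shows "norm (tau \<mu> x) \<le> inverse \<mu> ^ m * norm x"
  using hds_norm_tau_le[OF assms(1,2), of "inverse \<mu> ^ m" x] assms(2,3)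
  by (simp add: power_increasing one_le_inverse flip: power_inverse)

lemma hds_tau_mult:
  assumes hds: "hilbert_dilation_system m Xs tau" and "0 < \<delta>" "0 < \<gamma>"
  shows "tau \<delta> (tau \<gamma> x) = tau (\<delta> * \<gamma>) x"
proof -
  obtain f where f: "\<forall>\<nu>\<in>{1..m}. f \<nu> \<in> Xs \<nu>" "x = (\<Sum>\<nu>=1..m. f \<nu>)"
    using hds_decomposition[OF hds] by blast
  have "\<forall>\<nu>\<in>{1..m}. subspace (Xs \<nu>)"
    using hds unfolding hilbert_dilation_system_def by blast
  then have "\<forall>\<nu>\<in>{1..m}. inverse (\<gamma> ^ \<nu>) *\<^sub>R f \<nu> \<in> Xs \<nu>"
    using f(1) by (simp add: subspace_scale)
  then show ?thesis
    using f assms hds_tau_sum[OF hds] by (simp add: power_mult_distrib mult.commute)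
qed

lemma hds_tau_1:
  assumes hds: "hilbert_dilation_system m Xs tau"
  shows "tau 1 x = x"
proof -
  obtain f where "\<forall>\<nu>\<in>{1..m}. f \<nu> \<in> Xs \<nu>" "x = (\<Sum>\<nu>=1..m. f \<nu>)"
    using hds_decomposition[OF hds] by blast
  then show ?thesis
    using hds_tau_sum[OF hds, of f 1] by simp
qed

lemma hds_inj: "hilbert_dilation_system m Xs tau \<Longrightarrow> 0 < \<delta> \<Longrightarrow> inj (tau \<delta>)"
  by (rule inj_on_inverseI[of _ "tau (1/\<delta>)"]) (simp add: hds_tau_mult hds_tau_1)

lemma hds_image_mult:
  "hilbert_dilation_system m Xs tau \<Longrightarrow> 0 < \<delta> \<Longrightarrow> 0 < \<gamma> \<Longrightarrow> tau \<delta> ` tau \<gamma> ` A = tau (\<delta> * \<gamma>) ` A"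
  by (simp add: image_image hds_tau_mult)

lemma hds_image_Int_cball_transfer:
  assumes hds: "hilbert_dilation_system m Xs tau"
    and \<gamma>: "0 < \<gamma>" "\<gamma> \<le> \<delta>" "\<delta> \<le> \<rho> * \<gamma>"
    and incl: "tau \<gamma> ` H \<inter> cball 0 (\<rho> ^ m * r) \<subseteq> tau \<gamma> ` E"
  shows "tau \<delta> ` H \<inter> cball 0 r \<subseteq> tau \<delta> ` E"
proof
  fix g assume "g \<in> tau \<delta> ` H \<inter> cball 0 r"
  then obtain h where h: "h \<in> H" "g = tau \<delta> h" and g: "norm g \<le> r"
    by auto
  have \<delta>: "0 < \<delta>"
    using \<gamma> by linarith
  have "tau \<gamma> h = tau (\<gamma> / \<delta>) g"
    using hds_tau_mult[OF hds, of "\<gamma> / \<delta>" \<delta> h] h(2) \<delta> \<gamma> by simp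
  then have "norm (tau \<gamma> h) \<le> (\<delta> / \<gamma>) ^ m * norm g"
    using hds_norm_tau_le_power[OF hds, of "\<gamma> / \<delta>"] \<gamma> \<delta> by simp
  also have "\<dots> \<le> \<rho> ^ m * r"
  proof (intro mult_mono power_mono)
    show "\<delta> / \<gamma> \<le> \<rho>" "0 \<le> \<delta> / \<gamma>"
      using \<gamma> by (auto simp: divide_le_eq mult.commute)
    then show "0 \<le> \<rho> ^ m"
      by simp
  qed (use g in simp_all)
  finally have "tau \<gamma> h \<in> tau \<gamma> ` H \<inter> cball 0 (\<rho> ^ m * r)"
    using h(1) by simp
  then have "tau \<gamma> h \<in> tau \<gamma> ` E"
    using incl by blast
  then obtain e where "e \<in> E" "tau \<gamma> h = tau \<gamma> e"
    by auto
  then show "g \<in> tau \<delta> ` E"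
    using hds_inj[OF hds \<gamma>(1)] h(2) by (auto dest: injD)
qed

section \<open>Degenerate ellipsoids under contractions\<close>

definition long_axes_span :: "real \<Rightarrow> (nat \<Rightarrow> real) \<Rightarrow> (nat \<Rightarrow> 'a::euclidean_space) \<Rightarrow> 'a set" where
  "long_axes_span R sg v = span (v ` {i. i < DIM('a) \<and> R < sg i})"

lemma dim_long_axes_span:
  "ellipsoid_rep (E::'a::euclidean_space set) sg v \<Longrightarrow>
    dim (long_axes_span R sg v) = card {i. i < DIM('a) \<and> R < sg i}"
  unfolding long_axes_span_def
  by (rule dim_span_orthonormal, rule orthonormal_on_subset[OF ellipsoid_rep_orthonormal]) auto

lemma long_axes_span_Int_cball_subset:
  "ellipsoid_rep E sg v \<Longrightarrow> 0 < R \<Longrightarrow> long_axes_span R sg v \<inter> cball 0 R \<subseteq> E"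
  unfolding long_axes_span_def
  by (rule span_Int_cball_subset_ellipsoid_rep) auto

lemma degenerate_ellipsoid_rep_decompose:
  fixes E :: "'a::euclidean_space set"
  assumes rep: "ellipsoid_rep E sg v" and deg: "\<forall>i<DIM('a). sg i \<notin> {eps..1/eps}"
    and "0 < eps" "y \<in> E"
  obtains c w where "(\<Sum>i | i < DIM('a) \<and> 1/eps < sg i. (c i)\<^sup>2) \<le> 1"
    "y = (\<Sum>i | i < DIM('a) \<and> 1/eps < sg i. (c i * sg i) *\<^sub>R v i) + w" "norm w \<le> eps"
proof (rule ellipsoid_rep_decompose[OF rep _ _ _ \<open>y \<in> E\<close>])
  show "sg i \<le> eps" if "i < DIM('a)" "i \<notin> {i. i < DIM('a) \<and> 1/eps < sg i}" for i
    using that deg[rule_format, of i] by auto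
qed (use that \<open>0 < eps\<close> in auto)

lemma ellipsoid_subset_long_axes_span_plus_cball:
  fixes E :: "'a::euclidean_space set"
  assumes rep: "ellipsoid_rep E sg v" and deg: "\<forall>i<DIM('a). sg i \<notin> {eps..1/eps}" and "0 < eps"
  shows "E \<subseteq> {x + y | x y. x \<in> long_axes_span (1/eps) sg v \<and> y \<in> cball 0 eps}"
proof
  fix y assume "y \<in> E"
  let ?J = "{i. i < DIM('a) \<and> 1/eps < sg i}"
  obtain c w where "y = (\<Sum>i\<in>?J. (c i * sg i) *\<^sub>R v i) + w" "norm w \<le> eps"
    using degenerate_ellipsoid_rep_decompose[OF rep deg \<open>0 < eps\<close> \<open>y \<in> E\<close>] by blast
  moreover have "(\<Sum>i\<in>?J. (c i * sg i) *\<^sub>R v i) \<in> long_axes_span (1/eps) sg v"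
    unfolding long_axes_span_def by (intro span_sum span_scale span_base) auto
  ultimately show "y \<in> {x + y | x y. x \<in> long_axes_span (1/eps) sg v \<and> y \<in> cball 0 eps}"
    by auto
qed

lemma linear_image_subset_plus_cball:
  assumes "linear S" "\<And>x. norm (S x) \<le> norm x"
    and "F \<subseteq> {x + y | x y. x \<in> L \<and> y \<in> cball 0 r}"
  shows "S ` F \<subseteq> {x + y | x y. x \<in> S ` L \<and> y \<in> cball 0 r}"
proof
  fix z assume "z \<in> S ` F"
  then obtain f where "f \<in> F" "z = S f"
    by blast
  then obtain x y where "z = S x + S y" "x \<in> L" "norm y \<le> r"
    using assms(3) linear_add[OF assms(1)] by auto
  moreover have "S y \<in> cball 0 r"
    using assms(2)[of y] \<open>norm y \<le> r\<close> by simp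
  ultimately show "z \<in> {x + y | x y. x \<in> S ` L \<and> y \<in> cball 0 r}"
    by blast
qed

lemma dim_le_card_long_axes:
  fixes F G :: "'a::euclidean_space set"
  assumes rep: "ellipsoid_rep F sg v" and deg: "\<forall>i<DIM('a). sg i \<notin> {eps..1/eps}"
    and "0 < eps" "eps < R" "subspace G" and sub: "G \<inter> cball 0 R \<subseteq> F"
  shows "dim G \<le> card {i. i < DIM('a) \<and> 1/eps < sg i}"
proof (rule ccontr)
  define J where "J = {i. i < DIM('a) \<and> 1/eps < sg i}"
  define K where "K = {..<DIM('a)} - J"
  assume "\<not> dim G \<le> card {i. i < DIM('a) \<and> 1/eps < sg i}"
  moreover have J: "J \<subseteq> {..<DIM('a)}"
    unfolding J_def by auto
  then have "card K = DIM('a) - card J" "card J \<le> DIM('a)"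
    unfolding K_def using card_Diff_subset[OF finite_subset[OF J] J] card_mono[OF _ J] by simp_all
  moreover have "orthonormal_on K v"
    using ellipsoid_rep_orthonormal[OF rep] by (rule orthonormal_on_subset) (auto simp: K_def)
  then have "dim (span (v ` K)) = card K"
    by (rule dim_span_orthonormal)
  ultimately have "DIM('a) < dim (span (v ` K)) + dim G"
    unfolding J_def by linarith
  moreover have "0 \<le> R"
    using \<open>0 < eps\<close> \<open>eps < R\<close> by linarith
  ultimately obtain y where y: "y \<in> span (v ` K)" "y \<in> G" "norm y = R"
    using subspace_Int_exists_norm[OF subspace_span \<open>subspace G\<close>] by blast
  have "norm y \<le> eps"
  proof (rule ellipsoid_rep_Int_span_norm_le[OF rep _ _ _ _ y(1)])
    show "sg i \<le> eps" if "i \<in> K" for i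
      using that deg[rule_format, of i] unfolding K_def J_def by auto
    show "y \<in> F"
      using y sub by auto
  qed (use \<open>0 < eps\<close> in \<open>auto simp: K_def\<close>)
  then show False
    using \<open>eps < R\<close> y(3) by simp
qed

text \<open>Half the gradient at z of the quadratic form y \<mapsto> \<Sum>i\<in>J. (y \<bullet> v i / sg i)^2, whose unit
  sublevel set within span (v ` J) lies in the ellipsoid.\<close>
definition ellipsoid_grad :: "nat set \<Rightarrow> (nat \<Rightarrow> real) \<Rightarrow> (nat \<Rightarrow> 'a::real_inner) \<Rightarrow> 'a \<Rightarrow> 'a" where
  "ellipsoid_grad J sg v z = (\<Sum>i\<in>J. (z \<bullet> v i / (sg i)\<^sup>2) *\<^sub>R v i)"

lemma inner_ellipsoid_grad:
  "ellipsoid_grad J sg v z \<bullet> y = (\<Sum>i\<in>J. z \<bullet> v i * (y \<bullet> v i) / (sg i)\<^sup>2)"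
  unfolding ellipsoid_grad_def inner_sum_left by (rule sum.cong) (simp_all add: inner_commute)

lemma ellipsoid_grad_inner_self: "ellipsoid_grad J sg v z \<bullet> z = (\<Sum>i\<in>J. (z \<bullet> v i / sg i)\<^sup>2)"
  by (simp add: inner_ellipsoid_grad power_divide power2_eq_square)

lemma abs_inner_ellipsoid_grad_le:
  fixes E :: "'a::euclidean_space set"
  assumes rep: "ellipsoid_rep E sg v" and J: "J \<subseteq> {..<DIM('a)}" and pos: "\<And>i. i \<in> J \<Longrightarrow> 0 < sg i"
    and c: "(\<Sum>i\<in>J. (c i)\<^sup>2) \<le> 1" and z: "1 \<le> ellipsoid_grad J sg v z \<bullet> z"
  shows "\<bar>ellipsoid_grad J sg v z \<bullet> (\<Sum>i\<in>J. (c i * sg i) *\<^sub>R v i)\<bar> \<le> ellipsoid_grad J sg v z \<bullet> z"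
proof -
  have "(\<Sum>i\<in>J. (c i * sg i) *\<^sub>R v i) \<bullet> v j = c j * sg j" if "j \<in> J" for j
    using inner_sum_orthonormal[OF ellipsoid_rep_orthonormal[OF rep] finite_subset[OF J] J, of j] that J
    by auto
  then have eq: "ellipsoid_grad J sg v z \<bullet> (\<Sum>i\<in>J. (c i * sg i) *\<^sub>R v i) = (\<Sum>i\<in>J. (z \<bullet> v i / sg i) * c i)"
    unfolding inner_ellipsoid_grad using pos by (intro sum.cong) (auto simp: power2_eq_square)
  show ?thesis
    using abs_sum_mult_le_sum_squares[OF c, of "\<lambda>i. z \<bullet> v i / sg i"] z
    unfolding eq ellipsoid_grad_inner_self by blast
qed

lemma ellipsoid_image_orthogonal_norm_le:
  fixes S :: "'a::euclidean_space \<Rightarrow> 'a"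
  assumes S: "linear S" "\<And>x. norm (S x) \<le> norm x"
    and rep: "ellipsoid_rep E sg v" and deg: "\<forall>i<DIM('a). sg i \<notin> {eps..1/eps}" and "0 < eps"
    and J: "J = {i. i < DIM('a) \<and> 1/eps < sg i}"
    and z: "z \<in> span (v ` J)" "1 \<le> ellipsoid_grad J sg v z \<bullet> z"
    and x: "x \<in> S ` E" "\<forall>y\<in>S ` {y \<in> span (v ` J). ellipsoid_grad J sg v z \<bullet> y = 0}. y \<bullet> x = 0"
  shows "norm x \<le> norm (S z) + eps"
proof -
  let ?p = "ellipsoid_grad J sg v z"
  obtain e where e: "e \<in> E" "x = S e"
    using x(1) by blast
  obtain c w where c: "(\<Sum>i\<in>J. (c i)\<^sup>2) \<le> 1" and ew: "e = (\<Sum>i\<in>J. (c i * sg i) *\<^sub>R v i) + w" "norm w \<le> eps"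
    using degenerate_ellipsoid_rep_decompose[OF rep deg \<open>0 < eps\<close> e(1)] unfolding J by blast
  define u where "u = (\<Sum>i\<in>J. (c i * sg i) *\<^sub>R v i)"
  define \<beta> where "\<beta> = ?p \<bullet> u / (?p \<bullet> z)"
  have pos: "0 < sg i" if "i \<in> J" for i
    using that J \<open>0 < eps\<close> by (auto intro: less_trans[of 0 "1/eps"])
  have "\<bar>?p \<bullet> u\<bar> \<le> ?p \<bullet> z"
    unfolding u_def by (rule abs_inner_ellipsoid_grad_le[OF rep _ pos c z(2)]) (use J in auto)
  then have "\<bar>\<beta>\<bar> \<le> 1"
    using z(2) by (simp add: \<beta>_def abs_divide)
  have "u \<in> span (v ` J)"
    unfolding u_def by (intro span_sum span_scale span_base) auto
  then have "u - \<beta> *\<^sub>R z \<in> {y \<in> span (v ` J). ?p \<bullet> y = 0}"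
    using z by (simp add: \<beta>_def span_diff span_scale inner_diff_right)
  then have "(S u - \<beta> *\<^sub>R S z) \<bullet> x = 0"
    using x(2) by (auto simp: linear_diff[OF S(1)] linear_scale[OF S(1)])
  then have "norm x \<le> norm (S z) + norm (S w)"
    using \<open>\<bar>\<beta>\<bar> \<le> 1\<close> by (intro norm_le_of_orthogonal_component) (auto simp: e(2) ew(1) u_def linear_add[OF S(1)])
  then show ?thesis
    using S(2)[of w] ew(2) by linarith
qed

lemma ellipsoid_image_long_vector_orthogonal:
  fixes S :: "'a::euclidean_space \<Rightarrow> 'a"
  assumes S: "linear S" "inj S"
    and rep: "ellipsoid_rep (S ` E) sg v" and deg: "\<forall>i<DIM('a). sg i \<notin> {eps..1/eps}" and "0 < eps"
    and L: "subspace L" "S ` L \<inter> cball 0 (2*eps) \<subseteq> S ` E"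
    and z: "z \<in> L" "p \<bullet> z \<noteq> 0"
  obtains x where "x \<in> S ` E" "\<forall>y\<in>S ` {y \<in> L. p \<bullet> y = 0}. y \<bullet> x = 0" "norm x = 1/eps"
proof -
  let ?W = "S ` {y \<in> L. p \<bullet> y = 0}"
  have "dim ?W \<le> dim {y \<in> L. p \<bullet> y = 0}"
    by (rule dim_image_le[OF S(1)])
  also have "\<dots> < dim L"
    by (rule dim_Int_hyperplane_less[OF L(1) z])
  also have "\<dots> = dim (S ` L)"
    using dim_image_eq[OF S(1)] S(2) by (simp add: inj_on_subset)
  also have "\<dots> \<le> dim (long_axes_span (1/eps) sg v)"
    unfolding dim_long_axes_span[OF rep]
    by (rule dim_le_card_long_axes[OF rep deg \<open>0 < eps\<close> _ linear_subspace_image[OF S(1) L(1)] L(2)])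
      (use \<open>0 < eps\<close> in simp)
  finally have dim_W: "dim ?W < dim (long_axes_span (1/eps) sg v)" .
  have "subspace (long_axes_span (1/eps) sg v)"
    by (simp add: long_axes_span_def)
  moreover have "subspace ?W"
    by (rule linear_subspace_image[OF S(1) subspace_Int_hyperplane[OF L(1)]])
  ultimately obtain x where "x \<in> long_axes_span (1/eps) sg v" "\<forall>y\<in>?W. y \<bullet> x = 0" "norm x = 1/eps"
    by (rule exists_orthogonal_of_dim_less[OF _ _ dim_W, where r = "1/eps"]) (use \<open>0 < eps\<close> in auto)
  moreover from this have "x \<in> S ` E"
    using long_axes_span_Int_cball_subset[OF rep, of "1/eps"] \<open>0 < eps\<close> by auto
  ultimately show ?thesis
    using that by blast
qed

lemma long_axes_span_image_Int_cball_subset: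
  fixes S :: "'a::euclidean_space \<Rightarrow> 'a"
  assumes S: "linear S" "inj S" "\<And>x. norm (S x) \<le> norm x"
    and rep: "ellipsoid_rep E sg v" and deg: "\<forall>i<DIM('a). sg i \<notin> {eps..1/eps}"
    and deg': "eps_degenerate eps (S ` E)" and eps: "0 < eps" "eps < 1/2"
    and small: "S ` long_axes_span (1/eps) sg v \<inter> cball 0 (2*eps) \<subseteq> S ` E"
  shows "S ` long_axes_span (1/eps) sg v \<inter> cball 0 (1/(2*eps)) \<subseteq> S ` E"
proof
  define J where "J = {i. i < DIM('a) \<and> 1/eps < sg i}"
  have L: "long_axes_span (1/eps) sg v = span (v ` J)"
    unfolding long_axes_span_def J_def ..
  have J: "J \<subseteq> {..<DIM('a)}" and pos: "\<And>i. i \<in> J \<Longrightarrow> 0 < sg i"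
    unfolding J_def using eps(1) by (auto intro: less_trans[of 0 "1/eps"])
  fix g assume g: "g \<in> S ` long_axes_span (1/eps) sg v \<inter> cball 0 (1/(2*eps))"
  then obtain z where z: "z \<in> span (v ` J)" "g = S z"
    unfolding L by blast
  show "g \<in> S ` E"
  proof (cases "z \<in> E")
    case False
    let ?p = "ellipsoid_grad J sg v z"
    have "\<not> ?p \<bullet> z \<le> 1"
      using ellipsoid_rep_mem_of_span[OF rep J pos z(1)] False by (auto simp: ellipsoid_grad_inner_self)
    then have "1 < ?p \<bullet> z"
      by simp
    obtain sg' v' where rep': "ellipsoid_rep (S ` E) sg' v'" and deg'': "\<forall>i<DIM('a). sg' i \<notin> {eps..1/eps}"
      using deg' unfolding eps_degenerate_def by blast
    obtain x where x: "x \<in> S ` E" "\<forall>y\<in>S ` {y \<in> span (v ` J). ?p \<bullet> y = 0}. y \<bullet> x = 0" "norm x = 1/eps"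
      by (rule ellipsoid_image_long_vector_orthogonal[OF S(1,2) rep' deg'' eps(1) subspace_span _ z(1)])
        (use small \<open>1 < ?p \<bullet> z\<close> in \<open>auto simp: L\<close>)
    have "norm x \<le> norm g + eps"
      using ellipsoid_image_orthogonal_norm_le[OF S(1,3) rep deg eps(1) J_def z(1) _ x(1,2)]
        \<open>1 < ?p \<bullet> z\<close> z(2) by simp
    also have "\<dots> < 1/eps"
      using g half_inverse_plus_lt_inverse[OF eps] by simp
    finally show ?thesis
      using x(3) by simp
  qed (use z in blast)
qed

section \<open>Dilations of a degenerate ellipsoid\<close>

lemma hds_image_subset_long_axes_span_plus_cball:
  fixes E :: "'a::euclidean_space set"
  assumes hds: "hilbert_dilation_system m Xs tau"
    and rep: "ellipsoid_rep (tau a ` E) sg v" and deg: "\<forall>i<DIM('a). sg i \<notin> {eps..1/eps}"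
    and "0 < eps" "0 < a" "a \<le> \<delta>"
  shows "tau \<delta> ` E \<subseteq>
    {x + y | x y. x \<in> tau \<delta> ` tau (1/a) ` long_axes_span (1/eps) sg v \<and> y \<in> cball 0 eps}"
proof -
  have "tau (\<delta>/a) ` tau a ` E \<subseteq>
      {x + y | x y. x \<in> tau (\<delta>/a) ` long_axes_span (1/eps) sg v \<and> y \<in> cball 0 eps}"
    using \<open>0 < a\<close> \<open>a \<le> \<delta>\<close>
    by (intro linear_image_subset_plus_cball hds_linear[OF hds] hds_norm_tau_le_norm[OF hds]
        ellipsoid_subset_long_axes_span_plus_cball[OF rep deg \<open>0 < eps\<close>]) auto
  moreover have "tau (\<delta>/a) ` tau a ` E = tau \<delta> ` E" "tau \<delta> ` tau (1/a) ` L = tau (\<delta>/a) ` L" for L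
    using hds_image_mult[OF hds] \<open>0 < a\<close> \<open>a \<le> \<delta>\<close> by simp_all
  ultimately show ?thesis
    by simp
qed

lemma hds_image_Int_cball_subset:
  fixes E :: "'a::euclidean_space set"
  assumes hds: "hilbert_dilation_system m Xs tau"
    and rep: "ellipsoid_rep (tau a ` E) sg v" and deg: "\<forall>i<DIM('a). sg i \<notin> {eps..1/eps}"
    and eps: "0 < eps" "eps < 1/2" and "0 < a"
    and degen: "\<forall>\<delta>\<in>{a..b}. eps_degenerate eps (tau \<delta> ` E)" and "\<delta> \<in> {a..b}"
  shows "tau \<delta> ` tau (1/a) ` long_axes_span (1/eps) sg v \<inter> cball 0 (1/(2*eps)) \<subseteq> tau \<delta> ` E"
proof -
  let ?L = "long_axes_span (1/eps) sg v"
  have "eps * eps < 1/2 * (1/2)"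
    using eps by (intro mult_strict_mono) auto
  then have "2*eps < 1/(2*eps)"
    using eps(1) by (simp add: field_simps)
  then obtain \<rho> where \<rho>: "1 < \<rho>" "\<rho> ^ m * (2*eps) \<le> 1/(2*eps)"
    using exists_gt_one_power_mult_le[where r = "2*eps" and R = "1/(2*eps)" and m = m] eps(1) by auto
  have images: "tau \<delta> ` tau (1/a) ` ?L = tau (\<delta>/a) ` ?L" "tau \<delta> ` E = tau (\<delta>/a) ` tau a ` E"
    if "0 < \<delta>" for \<delta>
    using hds_image_mult[OF hds] that \<open>0 < a\<close> by simp_all
  show ?thesis
  proof (rule geometric_interval_induct[OF \<rho>(1) \<open>0 < a\<close> _ _ \<open>\<delta> \<in> {a..b}\<close>])
    show "tau a ` tau (1/a) ` ?L \<inter> cball 0 (1/(2*eps)) \<subseteq> tau a ` E"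
      using long_axes_span_Int_cball_subset[OF rep, of "1/eps"] eps \<open>0 < a\<close>
      by (auto simp: hds_image_mult[OF hds] hds_tau_1[OF hds] field_simps)
  next
    fix \<gamma> \<delta> assume \<gamma>: "a \<le> \<gamma>" "\<gamma> \<le> \<delta>" "\<delta> \<le> \<rho> * \<gamma>" "\<delta> \<le> b"
      and IH: "tau \<gamma> ` tau (1/a) ` ?L \<inter> cball 0 (1/(2*eps)) \<subseteq> tau \<gamma> ` E"
    have "0 < \<delta>" "0 < \<delta>/a" "1 \<le> \<delta>/a"
      using \<gamma> \<open>0 < a\<close> by auto
    note img = images[OF \<open>0 < \<delta>\<close>]
    have "cball 0 (\<rho> ^ m * (2*eps)) \<subseteq> cball (0::'a) (1/(2*eps))"
      using \<rho>(2) by auto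
    then have incl: "tau \<gamma> ` tau (1/a) ` ?L \<inter> cball 0 (\<rho> ^ m * (2*eps)) \<subseteq> tau \<gamma> ` E"
      using IH by blast
    have "tau \<delta> ` tau (1/a) ` ?L \<inter> cball 0 (2*eps) \<subseteq> tau \<delta> ` E"
      by (rule hds_image_Int_cball_transfer[OF hds _ _ _ incl]) (use \<gamma> \<open>0 < a\<close> in auto)
    moreover have "eps_degenerate eps (tau \<delta> ` E)"
      using degen \<gamma> by auto
    ultimately show "tau \<delta> ` tau (1/a) ` ?L \<inter> cball 0 (1/(2*eps)) \<subseteq> tau \<delta> ` E"
      unfolding img
      by (rule long_axes_span_image_Int_cball_subset[OF hds_linear[OF hds \<open>0 < \<delta>/a\<close>]
          hds_inj[OF hds \<open>0 < \<delta>/a\<close>] hds_norm_tau_le_norm[OF hds \<open>1 \<le> \<delta>/a\<close>] rep deg _ eps, rotated])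
  qed
qed

theorem lemma4p8:
  fixes m :: nat and Xs :: "nat \<Rightarrow> 'a::euclidean_space set"
    and tau :: "real \<Rightarrow> 'a \<Rightarrow> 'a" and E :: "'a set"
    and eps a b :: real
  assumes "hilbert_dilation_system m Xs tau"
    and "ellipsoid E"
    and "0 < eps" and "eps < 1/2"
    and "0 < a" and "a \<le> b"
    and "\<forall>delta\<in>{a..b}. eps_degenerate eps (tau delta ` E)"
  shows "\<exists>H. subspace H \<and>
           (\<forall>delta\<in>{a..b}.
              tau delta ` E \<subseteq> {x + y | x y. x \<in> tau delta ` H \<and> y \<in> cball 0 eps} \<and>
              tau delta ` H \<inter> cball 0 (1 / (2 * eps)) \<subseteq> tau delta ` E)"
proof -
  obtain sg v where rep: "ellipsoid_rep (tau a ` E) sg v" and deg: "\<forall>i<DIM('a). sg i \<notin> {eps..1/eps}"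
    using assms(6,7) unfolding eps_degenerate_def by force
  define H where "H = tau (1/a) ` long_axes_span (1/eps) sg v"
  have "subspace H"
    unfolding H_def long_axes_span_def
    using assms(5) by (intro linear_subspace_image hds_linear[OF assms(1)] subspace_span) simp
  moreover have "tau \<delta> ` E \<subseteq> {x + y | x y. x \<in> tau \<delta> ` H \<and> y \<in> cball 0 eps}" if "\<delta> \<in> {a..b}" for \<delta>
    unfolding H_def using that assms(3,5)
    by (intro hds_image_subset_long_axes_span_plus_cball[OF assms(1) rep deg]) auto
  moreover have "tau \<delta> ` H \<inter> cball 0 (1/(2*eps)) \<subseteq> tau \<delta> ` E" if "\<delta> \<in> {a..b}" for \<delta>
    unfolding H_def by (rule hds_image_Int_cball_subset[OF assms(1) rep deg assms(3,4,5,7) that])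
  ultimately show ?thesis
    by blast
qed

end
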